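(* In the setting described in the context, suppose that the matrix $J$ satisfies $\sup_{|i-j|\le R}|J_{i,j}|<\infty$ for every $R\ge0$. Then for every $\ell\ge0$, \[ \lim_{n\to\infty}\Big|\int_{\mathbb{R}}x^\ell\,d\nu_n(x)-\int_{\mathbb{R}}x^\ell\,d\eta_n(x)\Big|=0, \] and consequently $\lim_{n\to\infty}\big|\int f\,d\nu_n-\int f\,d\eta_n\big|=0$ for every polynomial $f\in\mathbb{R}[x]$.
   Context: Let $r\ge1$ and let $\mu_1,\dots,\mu_r$ be positive Borel measures on $\mathbb{R}$ with all moments finite, forming a perfect system: for every $\vec n\in\mathbb{N}_0^r$ there is a monic polynomial $P_{\vec n}$ of degree $|\vec n|=n_1+\dots+n_r$ with $\int x^kP_{\vec n}\,d\mu_j=0$ for $0\le k\le n_j-1$, $1\le j\le r$. Type I polynomials $A_{\vec n}=(A_{\vec n,1},\dots,A_{\vec n,r})$: $\deg A_{\vec n,j}\le n_j-1$, $\sum_j\int x^kA_{\vec n,j}\,d\mu_j=0$ for $0\le k\le|\vec n|-2$, and $=1$ for $k=|\vec n|-1$. Let $\mu$ be a positive measure with $\mu_j\ll\mu$, $w_j=d\mu_j/d\mu$, $Q_{\vec n}=\sum_jA_{\vec n,j}w_j$. Fix a path $(\vec n_\ell)_{\ell\ge0}$ with $|\vec n_\ell|=\ell$, $\vec n_{\ell+1}=\vec n_\ell+\vec e_{i_\ell}$ ($\vec e_j$ the $j$-th unit vector), and set $p_\ell=P_{\vec n_\ell}$, $q_\ell=Q_{\vec n_{\ell+1}}$, so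 that $\int p_\ell q_{\ell'}\,d\mu=\delta_{\ell,\ell'}$. The Christoffel--Darboux kernel is $K_n(x,y)=\sum_{j=0}^{n-1}p_j(x)q_j(y)$. Define $\nu_n=\frac1n\sum_{y:\,p_n(y)=0}\delta_y$ (zeros counted with multiplicity) and the signed measure $d\eta_n(x)=\frac1nK_n(x,x)\,d\mu(x)$. The matrix $J=[J_{\ell,k}]_{\ell,k\ge0}$ is defined by $xp_\ell=\sum_{k=0}^{\ell+1}J_{\ell,k}p_k$, $J_{\ell,k}=0$ for $k>\ell+1$. *)

theory Defs
  imports "HOL-Analysis.Analysis" "HOL-Computational_Algebra.Polynomial"
begin

text \<open>Multi-indices are functions nat \<Rightarrow> nat; only the components j < r matter.
  Components are 0-based: j = 0, ..., r-1.\<close>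

definition mindex_size :: "nat \<Rightarrow> (nat \<Rightarrow> nat) \<Rightarrow> nat" where
  "mindex_size r n = (\<Sum>j<r. n j)"

definition mop_cond :: "(nat \<Rightarrow> real measure) \<Rightarrow> nat \<Rightarrow> (nat \<Rightarrow> nat) \<Rightarrow> real poly \<Rightarrow> bool" where
  "mop_cond \<mu>s r n p \<longleftrightarrow> lead_coeff p = 1 \<and> degree p = mindex_size r n \<and>
     (\<forall>j<r. \<forall>k<n j. (\<integral>x. x ^ k * poly p x \<partial>\<mu>s j) = 0)"

definition perfect_system :: "(nat \<Rightarrow> real measure) \<Rightarrow> nat \<Rightarrow> bool" where
  "perfect_system \<mu>s r \<longleftrightarrow> (\<forall>n. \<exists>!p. mop_cond \<mu>s r n p)"

definition mop :: "(nat \<Rightarrow> real measure) \<Rightarrow> nat \<Rightarrow> (nat \<Rightarrow> nat) \<Rightarrow> real poly" where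
  "mop \<mu>s r n = (THE p. mop_cond \<mu>s r n p)"

text \<open>Type I condition (components j \<ge> r are set to 0 for definiteness).\<close>
definition typeI_cond :: "(nat \<Rightarrow> real measure) \<Rightarrow> nat \<Rightarrow> (nat \<Rightarrow> nat) \<Rightarrow> (nat \<Rightarrow> real poly) \<Rightarrow> bool" where
  "typeI_cond \<mu>s r n A \<longleftrightarrow>
     (\<forall>j<r. if n j = 0 then A j = 0 else degree (A j) < n j) \<and>
     (\<forall>j\<ge>r. A j = 0) \<and>
     (\<forall>k<mindex_size r n. (\<Sum>j<r. \<integral>x. x ^ k * poly (A j) x \<partial>\<mu>s j)
        = (if k = mindex_size r n - 1 then 1 else 0))"

definition typeI :: "(nat \<Rightarrow> real measure) \<Rightarrow> nat \<Rightarrow> (nat \<Rightarrow> nat) \<Rightarrow> nat \<Rightarrow> real poly" where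
  "typeI \<mu>s r n = (THE A. typeI_cond \<mu>s r n A)"

text \<open>The path: n_l = sum over k<l of e_(i k), i.e. n_0 = 0 and n_(l+1) = n_l + e_(i l).\<close>
definition path_idx :: "(nat \<Rightarrow> nat) \<Rightarrow> nat \<Rightarrow> nat \<Rightarrow> nat" where
  "path_idx i l = (\<lambda>j. card {k. k < l \<and> i k = j})"

definition pth :: "(nat \<Rightarrow> real measure) \<Rightarrow> nat \<Rightarrow> (nat \<Rightarrow> nat) \<Rightarrow> nat \<Rightarrow> real poly" where
  "pth \<mu>s r i l = mop \<mu>s r (path_idx i l)"

definition qth :: "(nat \<Rightarrow> real measure) \<Rightarrow> nat \<Rightarrow> (nat \<Rightarrow> nat) \<Rightarrow> (nat \<Rightarrow> real \<Rightarrow> real)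
    \<Rightarrow> nat \<Rightarrow> real \<Rightarrow> real" where
  "qth \<mu>s r i w l x = (\<Sum>j<r. poly (typeI \<mu>s r (path_idx i (Suc l)) j) x * w j x)"

definition CD_kernel :: "(nat \<Rightarrow> real measure) \<Rightarrow> nat \<Rightarrow> (nat \<Rightarrow> nat) \<Rightarrow> (nat \<Rightarrow> real \<Rightarrow> real)
    \<Rightarrow> nat \<Rightarrow> real \<Rightarrow> real \<Rightarrow> real" where
  "CD_kernel \<mu>s r i w n x y = (\<Sum>k<n. poly (pth \<mu>s r i k) x * qth \<mu>s r i w k y)"

definition Jmat :: "(nat \<Rightarrow> real measure) \<Rightarrow> nat \<Rightarrow> (nat \<Rightarrow> nat) \<Rightarrow> nat \<Rightarrow> nat \<Rightarrow> real" where
  "Jmat \<mu>s r i l = (THE c. (\<forall>k>Suc l. c k = 0) \<and>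
      [:0, 1:] * pth \<mu>s r i l = (\<Sum>k\<le>Suc l. smult (c k) (pth \<mu>s r i k)))"

text \<open>Integral of a real polynomial f against the normalized zero counting measure nu_n of p_n
  (zeros taken in the complex plane, counted with multiplicity).\<close>
definition nu_int :: "(nat \<Rightarrow> real measure) \<Rightarrow> nat \<Rightarrow> (nat \<Rightarrow> nat) \<Rightarrow> nat \<Rightarrow> real poly \<Rightarrow> complex" where
  "nu_int \<mu>s r i n f =
     (\<Sum>z\<in>{z. poly (map_poly complex_of_real (pth \<mu>s r i n)) z = 0}.
        of_nat (order z (map_poly complex_of_real (pth \<mu>s r i n))) *
        poly (map_poly complex_of_real f) z) / of_nat n"

definition eta_int :: "real measure \<Rightarrow> (nat \<Rightarrow> real measure) \<Rightarrow> nat \<Rightarrow> (nat \<Rightarrow> nat)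
    \<Rightarrow> (nat \<Rightarrow> real \<Rightarrow> real) \<Rightarrow> nat \<Rightarrow> real poly \<Rightarrow> real" where
  "eta_int \<mu> \<mu>s r i w n f = (\<integral>x. poly f x * CD_kernel \<mu>s r i w n x x \<partial>\<mu>) / real n"

end

theory Submission
  imports Defs "HOL-Computational_Algebra.Fundamental_Theorem_Algebra"
begin

text \<open>Both integrals are normalized traces of multiplication by \<open>f\<close>.
  The sum of \<open>f\<close> over the zeros of \<open>p\<^sub>n\<close> is the trace of multiplication by \<open>f\<close> on
  \<open>\<real>[x]/(p\<^sub>n)\<close>; in the basis \<open>p\<^sub>0, \<dots>, p\<^sub>n\<^sub>-\<^sub>1\<close> this is the trace of \<open>f(J\<^sub>n)\<close>, where
  \<open>J\<^sub>n\<close> is the \<open>n \<times> n\<close> truncation of \<open>J\<close>. By biorthogonality of \<open>(p\<^sub>k)\<close> and \<open>(q\<^sub>k)\<close>,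
  \<open>\<integral> f K\<^sub>n(x,x) d\<mu>\<close> is the sum of the first \<open>n\<close> diagonal entries of \<open>f(J)\<close>.
  The \<open>k\<close>-th diagonal entries of \<open>f(J\<^sub>n)\<close> and \<open>f(J)\<close> agree as soon as \<open>k + deg f < n\<close>,
  and all of them are bounded in terms of the bounds on the bands of \<open>J\<close>, because \<open>J\<close> is lower
  Hessenberg. Hence the two traces differ by \<open>O(deg f)\<close>, and the normalized ones by \<open>O(deg f / n)\<close>.\<close>

definition degree_lt :: "'a::zero poly \<Rightarrow> nat \<Rightarrow> bool" where
  "degree_lt f n \<longleftrightarrow> (\<forall>k\<ge>n. coeff f k = 0)"

lemma degree_lt_iff: "degree_lt f n \<longleftrightarrow> f = 0 \<or> degree f < n"
proof
  assume "degree_lt f n"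
  then show "f = 0 \<or> degree f < n"
    unfolding degree_lt_def using leading_coeff_0_iff[of f] not_less by blast
next
  assume "f = 0 \<or> degree f < n"
  then show "degree_lt f n" unfolding degree_lt_def by (auto intro: coeff_eq_0)
qed

lemma degree_lt_mod:
  assumes "degree_lt f n" "g \<noteq> 0"
  shows "degree_lt (f mod g) n"
  using assms degree_mod_less[OF assms(2), of f] mod_poly_less[of f g]
  by (auto simp: degree_lt_iff not_less)

lemma degree_lt_mod_degree: "p \<noteq> 0 \<Longrightarrow> degree_lt (f mod p) (degree p)"
  using degree_mod_less[of p f] by (auto simp: degree_lt_iff)

lemma smult_sum_right: "smult c (\<Sum>x\<in>A. f x) = (\<Sum>x\<in>A. smult c (f x))"
  by (induction A rule: infinite_finite_induct) (auto simp: smult_add_right)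

lemma monom_1_Suc_mult: "monom (1::'a::comm_semiring_1) (Suc s) * h = monom 1 s * ([:0, 1:] * h)"
  by (simp add: mult_monom[symmetric] monom_Suc monom_0 mult.assoc)

lemma poly_eq_sum_monom:
  fixes h :: "'a::comm_semiring_1 poly"
  assumes "degree_lt h m"
  shows "h = (\<Sum>t<m. smult (coeff h t) (monom 1 t))"
proof (rule poly_eqI)
  fix n
  have "coeff (\<Sum>t<m. smult (coeff h t) (monom 1 t)) n = (\<Sum>t<m. if t = n then coeff h t else 0)"
    unfolding coeff_sum by (intro sum.cong) auto
  then show "coeff h n = coeff (\<Sum>t<m. smult (coeff h t) (monom 1 t)) n"
    using assms by (auto simp: degree_lt_def)
qed

lemma mult_eq_sum_monom_mult:
  fixes f g :: "'a::comm_semiring_1 poly"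
  shows "f * g = (\<Sum>t<Suc (degree f). smult (coeff f t) (monom 1 t * g))"
proof -
  have "f = (\<Sum>t<Suc (degree f). smult (coeff f t) (monom 1 t))"
    by (rule poly_eq_sum_monom) (simp add: degree_lt_iff)
  then have "f * g = (\<Sum>t<Suc (degree f). smult (coeff f t) (monom 1 t)) * g"
    by (rule arg_cong[where f = "\<lambda>x. x * g"])
  then show ?thesis by (simp only: sum_distrib_right mult_smult_left)
qed

lemma mult_sum_smult_mod:
  "(g * (\<Sum>j\<in>A. smult (a j) (h j))) mod p = (\<Sum>j\<in>A. smult (a j) ((g * h j) mod p))"
  by (induction A rule: infinite_finite_induct) (simp_all add: distrib_left poly_mod_add_left mod_smult_left)

lemma sum_smult_mod: "(\<Sum>j\<in>A. smult (a j) (h j)) mod p = (\<Sum>j\<in>A. smult (a j) (h j mod p))"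
  using mult_sum_smult_mod[of 1 a h A p] by simp

section \<open>Coordinates with respect to a monic basis\<close>

definition monic_basis :: "(nat \<Rightarrow> 'a::field poly) \<Rightarrow> bool" where
  "monic_basis b \<longleftrightarrow> (\<forall>k. degree (b k) = k \<and> lead_coeff (b k) = 1)"

lemma coeff_monic_basis_self: "monic_basis b \<Longrightarrow> coeff (b k) k = 1"
  unfolding monic_basis_def by metis

lemma coeff_monic_basis_above: "monic_basis b \<Longrightarrow> k < m \<Longrightarrow> coeff (b k) m = 0"
  unfolding monic_basis_def by (metis coeff_eq_0)

lemma monic_basis_spans:
  assumes b: "monic_basis b" and "degree_lt f n"
  shows "\<exists>a. f = (\<Sum>k<n. smult (a k) (b k))"
  using assms(2)
proof (induction n arbitrary: f)
  case 0
  then show ?case by (simp add: degree_lt_def poly_eq_iff)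
next
  case (Suc n)
  have "degree_lt (f - smult (coeff f n) (b n)) n"
    unfolding degree_lt_def
  proof (intro allI impI)
    fix k assume "n \<le> k"
    then show "coeff (f - smult (coeff f n) (b n)) k = 0"
      using Suc.prems coeff_monic_basis_self[OF b, of n] coeff_monic_basis_above[OF b, of n k]
      by (cases "k = n") (auto simp: degree_lt_def)
  qed
  then obtain a where "f - smult (coeff f n) (b n) = (\<Sum>k<n. smult (a k) (b k))"
    using Suc.IH by blast
  then have "f = (\<Sum>k<Suc n. smult ((a(n := coeff f n)) k) (b k))"
    by (simp add: algebra_simps)
  then show ?case by blast
qed

lemma monic_basis_independent:
  assumes b: "monic_basis b" and "(\<Sum>k<n. smult (a k) (b k)) = 0" "k < n"
  shows "a k = 0"
  using assms(2,3)
proof (induction n)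
  case (Suc n)
  have "(\<Sum>k<n. a k * coeff (b k) n) = 0"
    by (intro sum.neutral) (simp add: coeff_monic_basis_above[OF b])
  then have "coeff (\<Sum>k<Suc n. smult (a k) (b k)) n = a n"
    by (simp add: coeff_sum coeff_monic_basis_self[OF b])
  then have "a n = 0" using Suc.prems(1) by (metis coeff_0)
  then show ?case using Suc by (cases "k = n") auto
qed simp

definition basis_coord :: "(nat \<Rightarrow> 'a::field poly) \<Rightarrow> 'a poly \<Rightarrow> nat \<Rightarrow> 'a" where
  "basis_coord b f = (SOME a. (\<forall>k>degree f. a k = 0) \<and> f = (\<Sum>k<Suc (degree f). smult (a k) (b k)))"

lemma basis_coord_spec:
  assumes b: "monic_basis b"
  shows "(\<forall>k>degree f. basis_coord b f k = 0) \<and> f = (\<Sum>k<Suc (degree f). smult (basis_coord b f k) (b k))"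
proof -
  have "degree_lt f (Suc (degree f))" by (simp add: degree_lt_iff)
  then obtain a where a: "f = (\<Sum>k<Suc (degree f). smult (a k) (b k))"
    using monic_basis_spans[OF b] by blast
  define a' where "a' k = (if k \<le> degree f then a k else 0)" for k
  have "f = (\<Sum>k<Suc (degree f). smult (a' k) (b k))"
    by (subst a, rule sum.cong) (auto simp: a'_def)
  then have "\<exists>a. (\<forall>k>degree f. a k = 0) \<and> f = (\<Sum>k<Suc (degree f). smult (a k) (b k))"
    by (intro exI[of _ a']) (auto simp: a'_def)
  then show ?thesis unfolding basis_coord_def by (rule someI_ex)
qed

lemma sum_smult_extend:
  fixes n N :: nat
  assumes "n \<le> N"
  shows "(\<Sum>k<n. smult (a k) (b k)) = (\<Sum>k<N. smult (if k < n then a k else 0) (b k))"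
  by (rule sum.mono_neutral_cong_left) (use assms in auto)

lemma basis_coord_of_expansion:
  assumes b: "monic_basis b" and f: "f = (\<Sum>k<n. smult (a k) (b k))"
  shows "basis_coord b f k = (if k < n then a k else 0)"
proof -
  define N where "N = max (Suc k) (max n (Suc (degree f)))"
  define a' where "a' k = (if k < n then a k else 0)" for k
  define c where "c k = (if k < Suc (degree f) then basis_coord b f k else 0)" for k
  have a': "f = (\<Sum>k<N. smult (a' k) (b k))"
    unfolding f a'_def by (rule sum_smult_extend) (simp add: N_def)
  have c: "f = (\<Sum>k<N. smult (c k) (b k))"
  proof -
    have "f = (\<Sum>k<Suc (degree f). smult (basis_coord b f k) (b k))"
      using basis_coord_spec[OF b] by blast
    also have "\<dots> = (\<Sum>k<N. smult (c k) (b k))"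
      unfolding c_def by (rule sum_smult_extend) (simp add: N_def)
    finally show ?thesis .
  qed
  have "(\<Sum>k<N. smult (a' k - c k) (b k)) = (\<Sum>k<N. smult (a' k) (b k)) - (\<Sum>k<N. smult (c k) (b k))"
    by (simp add: smult_diff_left sum_subtractf)
  also have "\<dots> = 0"
    unfolding a'[symmetric] c[symmetric] by simp
  finally have "(\<Sum>k<N. smult (a' k - c k) (b k)) = 0" .
  then have "a' k = c k"
    using monic_basis_independent[OF b, where n=N and a="\<lambda>k. a' k - c k" and k=k] by (simp add: N_def)
  then show ?thesis
    using basis_coord_spec[OF b, of f] by (auto simp: a'_def c_def split: if_splits)
qed

lemma basis_expansion:
  assumes b: "monic_basis b" and f: "degree_lt f n"
  shows "f = (\<Sum>k<n. smult (basis_coord b f k) (b k))"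
proof -
  obtain a where a: "f = (\<Sum>k<n. smult (a k) (b k))" using monic_basis_spans[OF b f] by blast
  show ?thesis using basis_coord_of_expansion[OF b a] by (subst a) (intro sum.cong; simp)
qed

lemma basis_coord_eq_0:
  assumes b: "monic_basis b" and "degree_lt f n" "n \<le> k"
  shows "basis_coord b f k = 0"
  using basis_coord_of_expansion[OF b basis_expansion[OF b assms(2)], of k] assms(3) by simp

lemma basis_coord_add:
  assumes b: "monic_basis b"
  shows "basis_coord b (f + g) k = basis_coord b f k + basis_coord b g k"
proof -
  define n where "n = Suc (max (degree f) (degree g))"
  define cf cg where "cf = basis_coord b f" and "cg = basis_coord b g"
  have fg: "degree_lt f n" "degree_lt g n" by (auto simp: degree_lt_iff n_def)
  have "f + g = (\<Sum>k<n. smult (cf k) (b k)) + (\<Sum>k<n. smult (cg k) (b k))"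
    unfolding cf_def cg_def using basis_expansion[OF b fg(1)] basis_expansion[OF b fg(2)] by simp
  also have "\<dots> = (\<Sum>k<n. smult (cf k + cg k) (b k))"
    by (simp add: smult_add_left sum.distrib)
  finally have "basis_coord b (f + g) k = (if k < n then cf k + cg k else 0)"
    by (rule basis_coord_of_expansion[OF b])
  then show ?thesis
    using basis_coord_eq_0[OF b fg(1), of k] basis_coord_eq_0[OF b fg(2), of k]
    by (auto simp: cf_def cg_def)
qed

lemma basis_coord_smult:
  assumes b: "monic_basis b"
  shows "basis_coord b (smult c f) k = c * basis_coord b f k"
proof -
  define n where "n = Suc (degree f)"
  define cf where "cf = basis_coord b f"
  have f: "degree_lt f n" by (simp add: degree_lt_iff n_def)
  have "smult c f = smult c (\<Sum>k<n. smult (cf k) (b k))"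
    unfolding cf_def using basis_expansion[OF b f] by simp
  also have "\<dots> = (\<Sum>k<n. smult (c * cf k) (b k))"
    by (simp add: smult_sum_right)
  finally have "basis_coord b (smult c f) k = (if k < n then c * cf k else 0)"
    by (rule basis_coord_of_expansion[OF b])
  then show ?thesis
    using basis_coord_eq_0[OF b f, of k] by (auto simp: cf_def)
qed

lemma basis_coord_sum:
  assumes b: "monic_basis b"
  shows "basis_coord b (\<Sum>x\<in>A. F x) k = (\<Sum>x\<in>A. basis_coord b (F x) k)"
  using basis_coord_smult[OF b, of 0 0 k]
  by (induction A rule: infinite_finite_induct) (auto simp: basis_coord_add[OF b])

lemma basis_coord_basis:
  assumes b: "monic_basis b"
  shows "basis_coord b (b m) k = (if k = m then 1 else 0)"
proof -
  have "b m = (\<Sum>j<Suc m. smult (if j = m then 1 else 0) (b j))"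
    by (simp add: if_distrib cong: if_cong)
  from basis_coord_of_expansion[OF b this, of k] show ?thesis by auto
qed

section \<open>Zeros as the trace of multiplication modulo a polynomial\<close>

definition newton_basis :: "(nat \<Rightarrow> 'a::field) \<Rightarrow> nat \<Rightarrow> 'a poly" where
  "newton_basis zs k = (\<Prod>i<k. [:- zs i, 1:])"

lemma monic_newton_basis: "monic_basis (newton_basis zs)"
proof -
  have "degree (newton_basis zs k) = k" for k
    by (simp add: newton_basis_def degree_prod_eq_sum_degree)
  moreover have "lead_coeff (newton_basis zs k) = 1" for k
    unfolding newton_basis_def lead_coeff_prod by simp
  ultimately show ?thesis unfolding monic_basis_def by blast
qed

lemma newton_basis_dvd: "k \<le> n \<Longrightarrow> newton_basis zs k dvd newton_basis zs n"
  unfolding newton_basis_def by (rule prod_dvd_prod_subset) auto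

lemma basis_coord_newton_basis_multiple:
  assumes "newton_basis zs (Suc k) dvd f" "j \<le> k"
  shows "basis_coord (newton_basis zs) f j = 0"
proof -
  let ?N = "newton_basis zs"
  define m where "m = Suc (max k (degree f))"
  define c where "c = basis_coord ?N f"
  define low where "low = (\<Sum>l<Suc k. smult (c l) (?N l))"
  have "f = (\<Sum>l<m. smult (c l) (?N l))"
    unfolding c_def by (rule basis_expansion[OF monic_newton_basis]) (simp add: degree_lt_iff m_def less_Suc_eq_le)
  also have "\<dots> = low + (\<Sum>l\<in>{Suc k..<m}. smult (c l) (?N l))"
    unfolding low_def lessThan_atLeast0 by (rule sum.atLeastLessThan_concat[symmetric]) (auto simp: m_def)
  finally have f: "f = low + (\<Sum>l\<in>{Suc k..<m}. smult (c l) (?N l))" .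
  have "?N (Suc k) dvd (\<Sum>l\<in>{Suc k..<m}. smult (c l) (?N l))"
    by (intro dvd_sum dvd_smult newton_basis_dvd) auto
  then have "?N (Suc k) dvd low"
    using assms(1) f by (metis add_diff_cancel_right' dvd_diff)
  moreover have "degree low \<le> k"
    unfolding low_def using monic_newton_basis[of zs]
    by (intro degree_sum_le) (auto simp: monic_basis_def intro: order.trans[OF degree_smult_le])
  moreover have "degree (?N (Suc k)) = Suc k"
    using monic_newton_basis[of zs] by (simp add: monic_basis_def)
  ultimately have "low = 0"
    by (metis dvd_imp_degree_le not_less_eq_eq)
  then show ?thesis
    using monic_basis_independent[OF monic_newton_basis, where n="Suc k" and a=c and k=j] assms(2)
    by (simp add: low_def c_def)
qed

lemma basis_coord_newton_basis_mult_mod: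
  assumes "k < n"
  shows "basis_coord (newton_basis zs) ((g * newton_basis zs k) mod newton_basis zs n) k = poly g (zs k)"
proof -
  let ?N = "newton_basis zs"
  have b: "monic_basis ?N" by (rule monic_newton_basis)
  define c where "c = poly g (zs k)"
  obtain h where "g - [:c:] = [:- zs k, 1:] * h"
    using poly_eq_0_iff_dvd[of "g - [:c:]" "zs k"] by (auto simp: c_def elim: dvdE)
  then have g: "g = [:c:] + [:- zs k, 1:] * h"
    by (simp add: algebra_simps)
  have "?N (Suc k) = [:- zs k, 1:] * ?N k"
    by (simp add: newton_basis_def mult.commute)
  moreover have "g * ?N k = [:c:] * ?N k + h * ([:- zs k, 1:] * ?N k)"
    unfolding g by (simp only: ring_distribs ac_simps)
  ultimately have "g * ?N k = smult c (?N k) + h * ?N (Suc k)"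
    by simp
  moreover have "?N k mod ?N n = ?N k"
    using b assms by (intro mod_poly_less) (simp add: monic_basis_def)
  ultimately have split: "(g * ?N k) mod ?N n = smult c (?N k) + (h * ?N (Suc k)) mod ?N n"
    by (simp add: poly_mod_add_left mod_smult_left)
  have "?N (Suc k) dvd (h * ?N (Suc k)) mod ?N n"
    using assms by (intro dvd_mod newton_basis_dvd) auto
  then have "basis_coord ?N ((h * ?N (Suc k)) mod ?N n) k = 0"
    by (rule basis_coord_newton_basis_multiple) simp
  then show ?thesis
    unfolding split c_def[symmetric]
    by (simp add: basis_coord_add[OF b] basis_coord_smult[OF b] basis_coord_basis[OF b])
qed

definition mod_mult_trace :: "(nat \<Rightarrow> 'a::field poly) \<Rightarrow> 'a poly \<Rightarrow> 'a poly \<Rightarrow> 'a" where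
  "mod_mult_trace b p g = (\<Sum>k<degree p. basis_coord b ((g * b k) mod p) k)"

lemma mod_mult_trace_basis_indep:
  assumes b: "monic_basis b" and e: "monic_basis e" and p: "p \<noteq> 0"
  shows "mod_mult_trace b p g = mod_mult_trace e p g"
proof -
  define n where "n = degree p"
  have bk: "b k = (\<Sum>j<n. smult (basis_coord e (b k) j) (e j))" if "k < n" for k
    using basis_expansion[OF e, of "b k" n] b that by (simp add: degree_lt_iff monic_basis_def)
  have ej: "(g * e j) mod p = (\<Sum>k<n. smult (basis_coord b ((g * e j) mod p) k) (b k))" for j
    unfolding n_def by (rule basis_expansion[OF b degree_lt_mod_degree[OF p]])
  have "mod_mult_trace b p g = (\<Sum>k<n. \<Sum>j<n. basis_coord e (b k) j * basis_coord b ((g * e j) mod p) k)"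
    unfolding mod_mult_trace_def n_def[symmetric]
  proof (rule sum.cong[OF refl])
    fix k assume "k \<in> {..<n}"
    then have "(g * b k) mod p = (\<Sum>j<n. smult (basis_coord e (b k) j) ((g * e j) mod p))"
      using bk[of k] mult_sum_smult_mod[of g "basis_coord e (b k)" e "{..<n}" p] by simp
    then show "basis_coord b ((g * b k) mod p) k = (\<Sum>j<n. basis_coord e (b k) j * basis_coord b ((g * e j) mod p) k)"
      by (simp add: basis_coord_sum[OF b] basis_coord_smult[OF b])
  qed
  also have "\<dots> = (\<Sum>j<n. \<Sum>k<n. basis_coord b ((g * e j) mod p) k * basis_coord e (b k) j)"
    by (subst sum.swap) (simp add: mult.commute)
  also have "\<dots> = mod_mult_trace e p g"
    unfolding mod_mult_trace_def n_def[symmetric]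
  proof (rule sum.cong[OF refl])
    fix j
    have "basis_coord e ((g * e j) mod p) j = basis_coord e (\<Sum>k<n. smult (basis_coord b ((g * e j) mod p) k) (b k)) j"
      using ej[of j] by (rule arg_cong)
    then show "(\<Sum>k<n. basis_coord b ((g * e j) mod p) k * basis_coord e (b k) j) = basis_coord e ((g * e j) mod p) j"
      by (simp add: basis_coord_sum[OF e] basis_coord_smult[OF e])
  qed
  finally show ?thesis .
qed

lemma sum_count_eq_sum_mset:
  assumes "finite S" "set_mset M \<subseteq> S"
  shows "(\<Sum>z\<in>S. of_nat (count M z) * h z) = sum_mset (image_mset h M)"
  using assms(2)
proof (induction M)
  case (add x M)
  have "(\<Sum>z\<in>S. of_nat (count (add_mset x M) z) * h z) = (\<Sum>z\<in>S. of_nat (count M z) * h z + (if z = x then h z else 0))"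
    by (intro sum.cong) (auto simp: algebra_simps)
  also have "\<dots> = (\<Sum>z\<in>S. of_nat (count M z) * h z) + h x"
    using add.prems assms(1) by (simp add: sum.distrib sum.delta)
  finally show ?case using add by (simp add: add.commute)
qed simp

text \<open>Factoring \<open>p\<close> over \<open>\<complex>\<close> into linear factors makes it the top element of a Newton basis,
  in which multiplication by \<open>g\<close> modulo \<open>p\<close> is triangular with the values of \<open>g\<close> at the roots on the diagonal.\<close>

lemma sum_roots_eq_mod_mult_trace:
  fixes p g :: "complex poly"
  assumes b: "monic_basis b" and p: "lead_coeff p = 1"
  shows "(\<Sum>z\<in>{z. poly p z = 0}. of_nat (order z p) * poly g z) = mod_mult_trace b p g"
proof -
  define n where "n = degree p"
  obtain zs where "smult (lead_coeff p) (\<Prod>i<n. [:- zs i, 1:]) = p"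
    unfolding n_def using complex_poly_decompose' by blast
  then have pz: "p = newton_basis zs n" using p by (simp add: newton_basis_def)
  have p0: "p \<noteq> 0" using p by auto
  have sum_singletons: "sum_mset (image_mset (poly g) (\<Sum>k<m. {#zs k#})) = (\<Sum>k<m. poly g (zs k))" for m
    by (induction m) (simp_all add: add.commute)
  have "(\<Sum>z\<in>{z. poly p z = 0}. of_nat (order z p) * poly g z) =
      (\<Sum>z\<in>{z. poly p z = 0}. of_nat (count (proots p) z) * poly g z)"
    using p0 by simp
  also have "\<dots> = sum_mset (image_mset (poly g) (proots p))"
    using p0 poly_roots_finite[OF p0] by (intro sum_count_eq_sum_mset) auto
  also have "proots p = (\<Sum>k<n. {#zs k#})"
    unfolding pz newton_basis_def by (simp add: proots_prod)
  also have "sum_mset (image_mset (poly g) (\<Sum>k<n. {#zs k#})) = (\<Sum>k<n. poly g (zs k))"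
    by (rule sum_singletons)
  also have "\<dots> = (\<Sum>k<n. basis_coord (newton_basis zs) ((g * newton_basis zs k) mod p) k)"
    by (simp add: pz basis_coord_newton_basis_mult_mod)
  also have "\<dots> = mod_mult_trace (newton_basis zs) p g"
    by (simp add: mod_mult_trace_def n_def)
  also have "\<dots> = mod_mult_trace b p g"
    by (rule mod_mult_trace_basis_indep[OF monic_newton_basis b p0])
  finally show ?thesis .
qed

section \<open>From real to complex coefficients\<close>

lemma coeff_map_poly_of_real: "coeff (map_poly of_real h) n = (of_real (coeff h n) :: 'a::real_field)"
  by (simp add: coeff_map_poly)

lemma map_poly_of_real_add:
  "(map_poly of_real (f + g) :: 'a::real_field poly) = map_poly of_real f + map_poly of_real g"
  by (rule poly_eqI) (simp add: coeff_map_poly_of_real)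

lemma map_poly_of_real_sum:
  "(map_poly of_real (\<Sum>x\<in>A. F x) :: 'a::real_field poly) = (\<Sum>x\<in>A. map_poly of_real (F x))"
  by (induction A rule: infinite_finite_induct) (auto simp: map_poly_of_real_add)

lemma map_poly_of_real_smult:
  "(map_poly of_real (smult c f) :: 'a::real_field poly) = smult (of_real c) (map_poly of_real f)"
  by (rule poly_eqI) (simp add: coeff_map_poly_of_real)

lemma map_poly_of_real_mult:
  "(map_poly of_real (f * g) :: 'a::real_field poly) = map_poly of_real f * map_poly of_real g"
  by (rule poly_eqI) (simp add: coeff_map_poly_of_real coeff_mult)

lemma degree_map_poly_of_real: "degree (map_poly of_real h :: 'a::real_field poly) = degree h"
  by (rule degree_map_poly) simp

lemma map_poly_of_real_mod:
  assumes "g \<noteq> 0"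
  shows "(map_poly of_real (f mod g) :: 'a::real_field poly) = map_poly of_real f mod map_poly of_real g"
proof -
  let ?c = "map_poly of_real :: real poly \<Rightarrow> 'a poly"
  have "?c f = ?c (f mod g) + ?c (f div g) * ?c g"
    by (metis map_poly_of_real_add map_poly_of_real_mult add.commute div_mult_mod_eq)
  then have "?c f mod ?c g = ?c (f mod g) mod ?c g" by simp
  also have "\<dots> = ?c (f mod g)"
    using degree_mod_less[OF assms, of f]
    by (cases "f mod g = 0") (auto intro: mod_poly_less simp: degree_map_poly_of_real)
  finally show ?thesis by simp
qed

lemma monic_basis_map_poly_of_real:
  "monic_basis b \<Longrightarrow> monic_basis (\<lambda>k. map_poly of_real (b k) :: 'a::real_field poly)"
  unfolding monic_basis_def by (simp add: degree_map_poly_of_real coeff_map_poly_of_real) metis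

lemma basis_coord_map_poly_of_real:
  assumes b: "monic_basis b"
  shows "basis_coord (\<lambda>k. map_poly of_real (b k)) (map_poly of_real h) k =
    (of_real (basis_coord b h k) :: 'a::real_field)"
proof -
  define n where "n = Suc (max k (degree h))"
  define c where "c = basis_coord b h"
  have "h = (\<Sum>j<n. smult (c j) (b j))"
    unfolding c_def by (rule basis_expansion[OF b]) (simp add: degree_lt_iff n_def less_Suc_eq_le)
  then have "(map_poly of_real h :: 'a poly) = (\<Sum>j<n. smult (of_real (c j)) (map_poly of_real (b j)))"
    by (simp add: map_poly_of_real_sum map_poly_of_real_smult)
  from basis_coord_of_expansion[OF monic_basis_map_poly_of_real[OF b] this, of k] show ?thesis
    by (simp add: n_def c_def)
qed

lemma mod_mult_trace_map_poly_of_real: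
  assumes b: "monic_basis b" and p: "p \<noteq> 0"
  shows "mod_mult_trace (\<lambda>k. map_poly of_real (b k)) (map_poly of_real p) (map_poly of_real g) =
    (of_real (mod_mult_trace b p g) :: 'a::real_field)"
  unfolding mod_mult_trace_def degree_map_poly_of_real of_real_sum
  by (simp add: map_poly_of_real_mult[symmetric] map_poly_of_real_mod[OF p, symmetric]
      basis_coord_map_poly_of_real[OF b])

section \<open>Entries of powers of banded matrices\<close>

fun band_power_bound :: "(nat \<Rightarrow> real) \<Rightarrow> nat \<Rightarrow> nat \<Rightarrow> real" where
  "band_power_bound B 0 R = 1"
| "band_power_bound B (Suc s) R = real (R + s + 2) * B (R + s + 1) * band_power_bound B s (R + s + 1)"

lemma band_power_bound_nonneg: "(\<And>R. 0 \<le> B R) \<Longrightarrow> 0 \<le> band_power_bound B s R"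
  by (induction s arbitrary: R) auto

text \<open>\<open>X s\<close> plays the role of the matrix \<open>K\<^sup>s\<close> for a lower Hessenberg matrix \<open>K\<close> whose entries at
  distance at most \<open>R\<close> from the diagonal are bounded by \<open>B R\<close>.\<close>

lemma banded_recursion_bound:
  fixes K :: "nat \<Rightarrow> nat \<Rightarrow> real" and X :: "nat \<Rightarrow> nat \<Rightarrow> nat \<Rightarrow> real" and B :: "nat \<Rightarrow> real"
  assumes K_bound: "\<And>R a c. a \<le> c + R \<Longrightarrow> c \<le> a + R \<Longrightarrow> \<bar>K a c\<bar> \<le> B R"
    and X_0: "\<And>a b. \<bar>X 0 a b\<bar> \<le> 1"
    and X_Suc: "\<And>s a b. X (Suc s) a b = (\<Sum>c<Suc (Suc a). K a c * X s c b)"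
    and X_upper: "\<And>s a b. a + s < b \<Longrightarrow> X s a b = 0"
    and "a \<le> b + R" "b \<le> a + R"
  shows "\<bar>X s a b\<bar> \<le> band_power_bound B s R"
  using assms(5,6)
proof (induction s arbitrary: R a b)
  case 0
  then show ?case using X_0 by simp
next
  case (Suc s)
  have B_nonneg: "0 \<le> B R" for R using K_bound[of 0 0 R] by auto
  define R' where "R' = R + s + 1"
  define S where "S = {c. c < Suc (Suc a) \<and> b \<le> c + s}"
  have "card S \<le> R + s + 2"
  proof -
    have "S \<subseteq> {b - s..<Suc (Suc a)}" by (auto simp: S_def)
    then have "card S \<le> card {b - s..<Suc (Suc a)}" by (intro card_mono) auto
    then show ?thesis using Suc.prems by simp
  qed
  have "\<bar>X (Suc s) a b\<bar> \<le> (\<Sum>c<Suc (Suc a). \<bar>K a c\<bar> * \<bar>X s c b\<bar>)"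
    unfolding X_Suc by (rule order_trans[OF sum_abs]) (simp add: abs_mult)
  also have "\<dots> = (\<Sum>c\<in>S. \<bar>K a c\<bar> * \<bar>X s c b\<bar>)"
    unfolding S_def by (rule sum.mono_neutral_right) (auto simp: X_upper not_le)
  also have "\<dots> \<le> (\<Sum>c\<in>S. B R' * band_power_bound B s R')"
  proof (rule sum_mono)
    fix c assume c: "c \<in> S"
    have "\<bar>K a c\<bar> \<le> B R'" using c Suc.prems unfolding S_def R'_def by (intro K_bound) auto
    moreover have "\<bar>X s c b\<bar> \<le> band_power_bound B s R'"
      using c Suc.prems unfolding S_def R'_def by (intro Suc.IH) auto
    ultimately show "\<bar>K a c\<bar> * \<bar>X s c b\<bar> \<le> B R' * band_power_bound B s R'"
      by (intro mult_mono) (auto simp: B_nonneg)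
  qed
  also have "\<dots> \<le> real (R + s + 2) * (B R' * band_power_bound B s R')"
    using \<open>card S \<le> R + s + 2\<close>
    by (simp, intro mult_right_mono) (auto intro!: mult_nonneg_nonneg B_nonneg band_power_bound_nonneg)
  finally show ?case by (simp add: R'_def mult.assoc)
qed

section \<open>Multiple orthogonal polynomials along a path\<close>

lemma path_idx_0: "path_idx i 0 j = 0"
  by (simp add: path_idx_def)

lemma path_idx_Suc: "path_idx i (Suc l) j = path_idx i l j + (if i l = j then 1 else 0)"
proof -
  have "{k. k < Suc l \<and> i k = j} = (if i l = j then insert l {k. k < l \<and> i k = j} else {k. k < l \<and> i k = j})"
    by (auto simp: less_Suc_eq)
  then show ?thesis by (simp add: path_idx_def)
qed

lemma path_idx_mono: "l \<le> m \<Longrightarrow> path_idx i l j \<le> path_idx i m j"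
  unfolding path_idx_def by (intro card_mono) auto

lemma mindex_size_path_idx:
  assumes "\<forall>l. i l < r"
  shows "mindex_size r (path_idx i l) = l"
proof (induction l)
  case (Suc l)
  have "(\<Sum>j<r. if i l = j then 1 else 0) = (1::nat)"
    using assms by simp
  then show ?case
    using Suc by (simp add: mindex_size_def path_idx_Suc sum.distrib)
qed (simp add: mindex_size_def path_idx_0)

locale mop_path =
  fixes r :: nat and \<mu>s :: "nat \<Rightarrow> real measure" and \<mu> :: "real measure"
    and w :: "nat \<Rightarrow> real \<Rightarrow> real" and i :: "nat \<Rightarrow> nat"
  assumes borel_mus: "\<forall>j<r. sets (\<mu>s j) = sets borel"
    and moments: "\<forall>j<r. \<forall>k::nat. integrable (\<mu>s j) (\<lambda>x. x ^ k)"
    and perfect: "perfect_system \<mu>s r"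
    and borel_mu: "sets \<mu> = sets borel"
    and w_meas: "\<forall>j<r. w j \<in> borel_measurable borel \<and> (\<forall>x. 0 \<le> w j x)"
    and w_RN: "\<forall>j<r. \<mu>s j = density \<mu> (\<lambda>x. ennreal (w j x))"
    and path: "\<forall>l. i l < r"
begin

abbreviation nvec :: "nat \<Rightarrow> nat \<Rightarrow> nat" where "nvec \<equiv> path_idx i"

abbreviation P :: "nat \<Rightarrow> real poly" where "P \<equiv> pth \<mu>s r i"

lemma mop_cond_P: "mop_cond \<mu>s r (nvec l) (P l)"
  using perfect unfolding perfect_system_def pth_def mop_def by (metis theI')

lemma P_unique: "mop_cond \<mu>s r (nvec l) q \<Longrightarrow> q = P l"
  using perfect mop_cond_P unfolding perfect_system_def by blast

lemma degree_P: "degree (P l) = l" and lead_coeff_P: "lead_coeff (P l) = 1"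
  using mop_cond_P[of l] mindex_size_path_idx[OF path, of l] unfolding mop_cond_def by auto

lemma monic_basis_P: "monic_basis P"
  unfolding monic_basis_def using degree_P lead_coeff_P by auto

lemma P_nonzero: "P l \<noteq> 0"
  using lead_coeff_P[of l] by auto

lemma P_orthogonal: "j < r \<Longrightarrow> k < nvec l j \<Longrightarrow> (\<integral>x. x ^ k * poly (P l) x \<partial>\<mu>s j) = 0"
  using mop_cond_P[of l] unfolding mop_cond_def by blast

definition moment :: "nat \<Rightarrow> real poly \<Rightarrow> real" where
  "moment j f = (\<integral>x. poly f x \<partial>\<mu>s j)"

lemma integrable_poly: "j < r \<Longrightarrow> integrable (\<mu>s j) (\<lambda>x. poly f x)"
  using moments unfolding poly_altdef by auto

lemma moment_add:
  assumes "j < r"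
  shows "moment j (f + g) = moment j f + moment j g"
proof -
  have "poly (f + g) = (\<lambda>x. poly f x + poly g x)" by (rule ext) simp
  then show ?thesis
    unfolding moment_def by (simp only:) (rule Bochner_Integration.integral_add; rule integrable_poly[OF assms])
qed

lemma moment_smult: "moment j (smult c f) = c * moment j f"
proof -
  have "poly (smult c f) = (\<lambda>x. c * poly f x)" by (rule ext) simp
  then show ?thesis unfolding moment_def by (simp only: integral_mult_right_zero)
qed

lemma moment_0: "moment j 0 = 0"
  using moment_smult[of j 0 0] by simp

lemma moment_sum: "j < r \<Longrightarrow> moment j (\<Sum>x\<in>A. F x) = (\<Sum>x\<in>A. moment j (F x))"
  by (induction A rule: infinite_finite_induct) (simp_all add: moment_add moment_0)

lemma moment_diff: "j < r \<Longrightarrow> moment j (f - g) = moment j f - moment j g"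
  using moment_add[of j f "- g"] moment_smult[of j "- 1" g] by simp

lemma integral_monom_mult: "(\<integral>x. x ^ k * poly f x \<partial>\<mu>s j) = moment j (monom 1 k * f)"
proof -
  have "poly (monom 1 k * f) = (\<lambda>x. x ^ k * poly f x)" by (rule ext) (simp add: poly_monom)
  then show ?thesis unfolding moment_def by (simp only:)
qed

text \<open>\<open>pairing f A = \<integral> f (\<Sum>\<^sub>j A\<^sub>j w\<^sub>j) d\<mu>\<close>; for the type I vector \<open>Q m\<close> below
  this is \<open>\<integral> f q\<^sub>m d\<mu>\<close>.\<close>

definition pairing :: "real poly \<Rightarrow> (nat \<Rightarrow> real poly) \<Rightarrow> real" where
  "pairing f A = (\<Sum>j<r. moment j (f * A j))"

lemma pairing_add_left: "pairing (f + g) A = pairing f A + pairing g A"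
  unfolding pairing_def by (simp add: distrib_right moment_add sum.distrib)

lemma pairing_smult_left: "pairing (smult c f) A = c * pairing f A"
  unfolding pairing_def by (simp add: moment_smult sum_distrib_left)

lemma pairing_0_left: "pairing 0 A = 0"
  unfolding pairing_def by (simp add: moment_0)

lemma pairing_sum_left: "pairing (\<Sum>x\<in>S. F x) A = (\<Sum>x\<in>S. pairing (F x) A)"
  by (induction S rule: infinite_finite_induct) (simp_all add: pairing_add_left pairing_0_left)

lemma pairing_add_right: "pairing f (\<lambda>j. A j + B j) = pairing f A + pairing f B"
  unfolding pairing_def by (simp add: distrib_left moment_add sum.distrib)

lemma pairing_smult_right: "pairing f (\<lambda>j. smult c (A j)) = c * pairing f A"
  unfolding pairing_def by (simp add: moment_smult sum_distrib_left)

lemma pairing_diff_right: "pairing f (\<lambda>j. A j - B j) = pairing f A - pairing f B"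
  unfolding pairing_def by (simp add: right_diff_distrib moment_diff sum_subtractf)

lemma pairing_expand:
  assumes "degree_lt f m"
  shows "pairing f A = (\<Sum>t<m. coeff f t * pairing (monom 1 t) A)"
proof -
  have "pairing f A = pairing (\<Sum>t<m. smult (coeff f t) (monom 1 t)) A"
    using poly_eq_sum_monom[OF assms] by (rule arg_cong)
  then show ?thesis by (simp only: pairing_sum_left pairing_smult_left)
qed

lemma pairing_P_expand: "pairing (P N) A = pairing (monom 1 N) A + (\<Sum>t<N. coeff (P N) t * pairing (monom 1 t) A)"
  using pairing_expand[of "P N" "Suc N" A] lead_coeff_P[of N] by (simp add: degree_lt_iff degree_P)

definition in_typeI_space :: "nat \<Rightarrow> (nat \<Rightarrow> real poly) \<Rightarrow> bool" where
  "in_typeI_space N A \<longleftrightarrow> (\<forall>j<r. degree_lt (A j) (nvec N j)) \<and> (\<forall>j\<ge>r. A j = 0)"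

lemma in_typeI_space_zero: "in_typeI_space N (\<lambda>_. 0)"
  and in_typeI_space_add: "in_typeI_space N A \<Longrightarrow> in_typeI_space N B \<Longrightarrow> in_typeI_space N (\<lambda>j. A j + B j)"
  and in_typeI_space_smult: "in_typeI_space N A \<Longrightarrow> in_typeI_space N (\<lambda>j. smult c (A j))"
  and in_typeI_space_diff: "in_typeI_space N A \<Longrightarrow> in_typeI_space N B \<Longrightarrow> in_typeI_space N (\<lambda>j. A j - B j)"
  unfolding in_typeI_space_def degree_lt_def by simp_all

lemma in_typeI_space_mono: "in_typeI_space N A \<Longrightarrow> N \<le> M \<Longrightarrow> in_typeI_space M A"
  unfolding in_typeI_space_def degree_lt_def by (meson path_idx_mono order_trans)

lemma in_typeI_space_iff:
  "in_typeI_space N A \<longleftrightarrow>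
    (\<forall>j<r. if nvec N j = 0 then A j = 0 else degree (A j) < nvec N j) \<and> (\<forall>j\<ge>r. A j = 0)"
  unfolding in_typeI_space_def degree_lt_iff by auto

lemma pairing_P_typeI_space:
  assumes "in_typeI_space N A"
  shows "pairing (P N) A = 0"
proof -
  have "moment j (P N * A j) = 0" if j: "j < r" for j
  proof -
    define c where "c = coeff (A j)"
    have Aj: "A j = (\<Sum>t<nvec N j. smult (c t) (monom 1 t))"
      unfolding c_def using assms j by (intro poly_eq_sum_monom) (simp add: in_typeI_space_def)
    have "moment j (P N * A j) = moment j (\<Sum>t<nvec N j. smult (c t) (monom 1 t * P N))"
      unfolding Aj by (simp add: sum_distrib_left mult.commute)
    also have "\<dots> = (\<Sum>t<nvec N j. c t * (\<integral>x. x ^ t * poly (P N) x \<partial>\<mu>s j))"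
      by (simp add: moment_sum[OF j] moment_smult integral_monom_mult)
    also have "\<dots> = 0"
      using P_orthogonal[OF j] by simp
    finally show ?thesis .
  qed
  then show ?thesis unfolding pairing_def by simp
qed

text \<open>Normality along the path: \<open>P N\<close> is not orthogonal to the next power \<open>x^(n\<^sub>N)\<^sub>i\<^sub>N\<close>
  with respect to \<open>\<mu>\<^sub>i\<^sub>N\<close>; otherwise \<open>P (Suc N) + P N\<close> would be a second type II polynomial of index \<open>n\<^sub>N\<^sub>+\<^sub>1\<close>.\<close>

definition step_moment :: "nat \<Rightarrow> real" where
  "step_moment N = (\<integral>x. x ^ (nvec N (i N)) * poly (P N) x \<partial>\<mu>s (i N))"

lemma step_moment_nonzero: "step_moment N \<noteq> 0"
proof
  assume zero: "step_moment N = 0"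
  define q where "q = P (Suc N) + P N"
  have "mop_cond \<mu>s r (nvec (Suc N)) q"
    unfolding mop_cond_def
  proof (intro conjI allI impI)
    have degree_q: "degree q = Suc N"
      unfolding q_def by (simp add: degree_add_eq_left degree_P)
    then show "degree q = mindex_size r (nvec (Suc N))"
      by (simp add: mindex_size_path_idx[OF path])
    show "lead_coeff q = 1"
      using lead_coeff_P[of "Suc N"] degree_q unfolding q_def by (simp add: degree_P coeff_eq_0)
    fix j k assume j: "j < r" and k: "k < nvec (Suc N) j"
    have "moment j (monom 1 k * P N) = 0"
    proof (cases "k < nvec N j")
      case True
      then show ?thesis using P_orthogonal[OF j] by (simp add: integral_monom_mult)
    next
      case False
      then have "j = i N" "k = nvec N j" using k by (auto simp: path_idx_Suc split: if_splits)
      then show ?thesis using zero unfolding step_moment_def by (simp add: integral_monom_mult)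
    qed
    moreover have "moment j (monom 1 k * P (Suc N)) = 0"
      using P_orthogonal[OF j k] by (simp add: integral_monom_mult)
    ultimately show "(\<integral>x. x ^ k * poly q x \<partial>\<mu>s j) = 0"
      unfolding integral_monom_mult q_def by (simp add: distrib_left moment_add[OF j])
  qed
  then have "q = P (Suc N)" by (rule P_unique)
  then show False using P_nonzero[of N] unfolding q_def by simp
qed

definition step_vector :: "nat \<Rightarrow> nat \<Rightarrow> real poly" where
  "step_vector N = (\<lambda>j. if j = i N then monom 1 (nvec N (i N)) else 0)"

lemma in_typeI_space_step_vector: "in_typeI_space (Suc N) (step_vector N)"
  using path[rule_format, of N] unfolding in_typeI_space_def step_vector_def
  by (auto simp: path_idx_Suc degree_lt_iff degree_monom_eq)

lemma pairing_P_step_vector: "pairing (P N) (step_vector N) = step_moment N"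
proof -
  have "pairing (P N) (step_vector N) = (\<Sum>j<r. if j = i N then moment (i N) (monom 1 (nvec N (i N)) * P N) else 0)"
    unfolding pairing_def step_vector_def by (rule sum.cong) (auto simp: moment_0 mult.commute)
  also have "\<dots> = step_moment N"
    using path[rule_format, of N] by (simp add: step_moment_def integral_monom_mult)
  finally show ?thesis .
qed

text \<open>\<open>W\<^sub>N\<^sub>+\<^sub>1 = W\<^sub>N \<oplus> \<real> \<cdot> step_vector N\<close>, and pairing with \<open>P N\<close> kills \<open>W\<^sub>N\<close> but not
  \<open>step_vector N\<close>. By induction on \<open>N\<close>, \<open>A \<mapsto> (pairing (monom 1 t) A)\<^sub>t\<^sub><\<^sub>N\<close> is therefore a bijection
  from \<open>W\<^sub>N\<close> onto \<open>\<real>\<^sup>N\<close>, which yields existence and uniqueness of type I vectors.\<close>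

lemma in_typeI_space_Suc_decompose:
  assumes A: "in_typeI_space (Suc N) A"
  shows "in_typeI_space N (\<lambda>j. A j - smult (coeff (A (i N)) (nvec N (i N))) (step_vector N j))"
  unfolding in_typeI_space_def
proof (intro conjI allI impI)
  fix j assume j: "j < r"
  have Aj: "degree_lt (A j) (nvec (Suc N) j)"
    using A j by (simp add: in_typeI_space_def)
  show "degree_lt (A j - smult (coeff (A (i N)) (nvec N (i N))) (step_vector N j)) (nvec N j)"
  proof (cases "j = i N")
    case True
    have "degree_lt (A j) (Suc (nvec N j))"
      using Aj True by (simp add: path_idx_Suc)
    then show ?thesis
      using True by (auto simp: degree_lt_def step_vector_def le_Suc_eq)
  next
    case False
    then show ?thesis using Aj by (simp add: path_idx_Suc step_vector_def)
  qed
next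
  fix j assume "r \<le> j"
  then show "A j - smult (coeff (A (i N)) (nvec N (i N))) (step_vector N j) = 0"
    using A path[rule_format, of N] by (auto simp: in_typeI_space_def step_vector_def)
qed

lemma typeI_space_unique:
  "in_typeI_space N D \<Longrightarrow> (\<forall>t<N. pairing (monom 1 t) D = 0) \<Longrightarrow> D = (\<lambda>_. 0)"
proof (induction N arbitrary: D)
  case 0
  then have "D j = 0" for j
    by (cases "j < r") (auto simp: in_typeI_space_def degree_lt_iff path_idx_0)
  then show ?case by auto
next
  case (Suc N)
  define c where "c = coeff (D (i N)) (nvec N (i N))"
  define D' where "D' = (\<lambda>j. D j - smult c (step_vector N j))"
  have D': "in_typeI_space N D'"
    unfolding D'_def c_def by (rule in_typeI_space_Suc_decompose[OF Suc.prems(1)])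
  have D: "D = (\<lambda>j. D' j + smult c (step_vector N j))" unfolding D'_def by simp
  have "0 = pairing (P N) D"
    using Suc.prems(2) by (simp add: pairing_P_expand)
  also have "\<dots> = c * step_moment N"
    by (subst D) (simp add: pairing_add_right pairing_smult_right pairing_P_step_vector
        pairing_P_typeI_space[OF D'])
  finally have "c = 0" using step_moment_nonzero by simp
  then have "in_typeI_space N D" using D' unfolding D'_def by simp
  then show ?case using Suc.prems(2) by (intro Suc.IH) simp_all
qed

lemma typeI_space_interpolate: "\<exists>A. in_typeI_space N A \<and> (\<forall>t<N. pairing (monom 1 t) A = y t)"
proof (induction N arbitrary: y)
  case 0
  show ?case using in_typeI_space_zero by blast
next
  case (Suc N)
  define c where "c = (y N + (\<Sum>t<N. coeff (P N) t * y t)) / step_moment N"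
  obtain A' where A': "in_typeI_space N A'" "\<forall>t<N. pairing (monom 1 t) A' = y t - c * pairing (monom 1 t) (step_vector N)"
    using Suc.IH[of "\<lambda>t. y t - c * pairing (monom 1 t) (step_vector N)"] by blast
  define A where "A = (\<lambda>j. A' j + smult c (step_vector N j))"
  have A_space: "in_typeI_space (Suc N) A" unfolding A_def
    by (intro in_typeI_space_add in_typeI_space_smult in_typeI_space_step_vector in_typeI_space_mono[OF A'(1)]) simp
  have below: "\<forall>t<N. pairing (monom 1 t) A = y t"
    using A'(2) by (simp add: A_def pairing_add_right pairing_smult_right)
  have "pairing (P N) A = c * step_moment N"
    by (simp add: A_def pairing_add_right pairing_smult_right pairing_P_step_vector pairing_P_typeI_space[OF A'(1)])
  also have "\<dots> = y N + (\<Sum>t<N. coeff (P N) t * y t)"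
    unfolding c_def using step_moment_nonzero by simp
  finally have "pairing (monom 1 N) A = y N"
    using below by (simp add: pairing_P_expand)
  then show ?case
    using A_space below by (intro exI[of _ A]) (auto simp: less_Suc_eq)
qed

lemma typeI_cond_iff:
  "typeI_cond \<mu>s r (nvec N) A \<longleftrightarrow>
    in_typeI_space N A \<and> (\<forall>t<N. pairing (monom 1 t) A = (if t = N - 1 then 1 else 0))"
  unfolding typeI_cond_def in_typeI_space_iff mindex_size_path_idx[OF path] pairing_def integral_monom_mult
  by (simp only: conj_assoc)

abbreviation Q :: "nat \<Rightarrow> nat \<Rightarrow> real poly" where
  "Q m \<equiv> typeI \<mu>s r (nvec (Suc m))"

lemma Q_typeI:
  "in_typeI_space (Suc m) (Q m) \<and> (\<forall>t<Suc m. pairing (monom 1 t) (Q m) = (if t = m then 1 else 0))"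
proof -
  have "\<exists>!A. typeI_cond \<mu>s r (nvec (Suc m)) A"
  proof -
    obtain A where A: "in_typeI_space (Suc m) A" "\<forall>t<Suc m. pairing (monom 1 t) A = (if t = m then 1 else 0)"
      using typeI_space_interpolate[of "Suc m" "\<lambda>t. if t = m then 1 else 0"] by blast
    have "B = A" if "typeI_cond \<mu>s r (nvec (Suc m)) B" for B
    proof -
      have diff0: "(\<lambda>j. B j - A j) = (\<lambda>_. 0)"
        using that A by (intro typeI_space_unique[of "Suc m"]) (auto simp: typeI_cond_iff in_typeI_space_diff pairing_diff_right)
      have "B j - A j = 0" for j
        using fun_cong[OF diff0, of j] by simp
      then show ?thesis by (intro ext) simp
    qed
    moreover have "typeI_cond \<mu>s r (nvec (Suc m)) A" using A by (simp add: typeI_cond_iff)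
    ultimately show ?thesis by blast
  qed
  then have "typeI_cond \<mu>s r (nvec (Suc m)) (Q m)" unfolding typeI_def by (rule theI')
  then show ?thesis by (simp add: typeI_cond_iff)
qed

lemma pairing_P_Q: "pairing (P l) (Q m) = (if l = m then 1 else 0)"
proof (cases "l \<le> m")
  case True
  have "pairing (P l) (Q m) = (\<Sum>t<Suc l. coeff (P l) t * pairing (monom 1 t) (Q m))"
    by (rule pairing_expand) (simp add: degree_lt_iff degree_P)
  also have "\<dots> = (\<Sum>t<Suc l. if t = m then coeff (P l) t else 0)"
    using Q_typeI[of m] True by (intro sum.cong) auto
  also have "\<dots> = (if l = m then 1 else 0)"
    using True lead_coeff_P[of l] by (auto simp: degree_P)
  finally show ?thesis .
next
  case False
  then have "in_typeI_space l (Q m)" using Q_typeI[of m] in_typeI_space_mono by auto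
  then show ?thesis using False pairing_P_typeI_space by auto
qed

lemma pairing_Q_eq_basis_coord: "pairing f (Q m) = basis_coord P f m"
proof -
  define n where "n = max (Suc (degree f)) (Suc m)"
  define c where "c = basis_coord P f"
  have "f = (\<Sum>k<n. smult (c k) (P k))"
    unfolding c_def by (rule basis_expansion[OF monic_basis_P]) (auto simp: degree_lt_iff n_def)
  then have "pairing f (Q m) = (\<Sum>k<n. c k * pairing (P k) (Q m))"
    by (simp add: pairing_sum_left pairing_smult_left)
  also have "\<dots> = (\<Sum>k<n. if k = m then c k else 0)"
    by (intro sum.cong) (auto simp: pairing_P_Q)
  also have "\<dots> = c m"
    by (simp add: n_def)
  finally show ?thesis by (simp add: c_def)
qed

lemma integral_density_poly:
  assumes j: "j < r"
  shows "integrable \<mu> (\<lambda>x. w j x * poly h x)" "(\<integral>x. w j x * poly h x \<partial>\<mu>) = moment j h"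
proof -
  have w: "w j \<in> borel_measurable \<mu>" "AE x in \<mu>. 0 \<le> w j x"
    using w_meas j measurable_cong_sets[OF borel_mu refl] by auto
  have "(\<lambda>x. poly h x) \<in> borel_measurable borel"
    by (intro borel_measurable_continuous_onI continuous_intros)
  then have h: "(\<lambda>x. poly h x) \<in> borel_measurable \<mu>"
    using measurable_cong_sets[OF borel_mu refl] by blast
  have dens: "\<mu>s j = density \<mu> (\<lambda>x. ennreal (w j x))" using w_RN j by auto
  show "integrable \<mu> (\<lambda>x. w j x * poly h x)"
    using integrable_poly[OF j, of h] integrable_density[OF h w] by (simp add: dens)
  show "(\<integral>x. w j x * poly h x \<partial>\<mu>) = moment j h"
    unfolding moment_def dens using integral_density[OF h w] by simp
qed

lemma integral_poly_mult_qth: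
  "integrable \<mu> (\<lambda>x. poly f x * qth \<mu>s r i w m x)"
  "(\<integral>x. poly f x * qth \<mu>s r i w m x \<partial>\<mu>) = basis_coord P f m"
proof -
  have q: "poly f x * qth \<mu>s r i w m x = (\<Sum>j<r. w j x * poly (f * Q m j) x)" for x
    unfolding qth_def by (simp add: sum_distrib_left algebra_simps)
  show "integrable \<mu> (\<lambda>x. poly f x * qth \<mu>s r i w m x)"
    unfolding q by (intro Bochner_Integration.integrable_sum integral_density_poly(1)) simp
  have "(\<integral>x. poly f x * qth \<mu>s r i w m x \<partial>\<mu>) = (\<Sum>j<r. \<integral>x. w j x * poly (f * Q m j) x \<partial>\<mu>)"
    unfolding q by (rule Bochner_Integration.integral_sum) (intro integral_density_poly(1), simp)
  also have "\<dots> = pairing f (Q m)"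
    unfolding pairing_def by (intro sum.cong refl integral_density_poly(2)) simp
  finally show "(\<integral>x. poly f x * qth \<mu>s r i w m x \<partial>\<mu>) = basis_coord P f m"
    by (simp add: pairing_Q_eq_basis_coord)
qed

lemma eta_int_eq: "eta_int \<mu> \<mu>s r i w n f = (\<Sum>k<n. basis_coord P (f * P k) k) / real n"
proof -
  have K: "poly f x * CD_kernel \<mu>s r i w n x x = (\<Sum>k<n. poly (f * P k) x * qth \<mu>s r i w k x)" for x
    unfolding CD_kernel_def by (simp add: sum_distrib_left algebra_simps)
  have "(\<integral>x. poly f x * CD_kernel \<mu>s r i w n x x \<partial>\<mu>) =
      (\<Sum>k<n. \<integral>x. poly (f * P k) x * qth \<mu>s r i w k x \<partial>\<mu>)"
    unfolding K by (rule Bochner_Integration.integral_sum) (rule integral_poly_mult_qth(1))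
  then show ?thesis
    unfolding eta_int_def by (simp only: integral_poly_mult_qth(2))
qed

abbreviation J :: "nat \<Rightarrow> nat \<Rightarrow> real" where "J \<equiv> Jmat \<mu>s r i"

lemma degree_lt_monom_mult_P: "degree_lt (monom 1 s * P a) (Suc (a + s))"
  using degree_mult_le[of "monom (1::real) s" "P a"] by (auto simp: degree_lt_iff degree_P degree_monom_eq)

lemma Jmat_eq_basis_coord: "J a c = basis_coord P ([:0, 1:] * P a) c"
proof -
  have x: "degree_lt ([:0, 1:] * P a) (Suc (Suc a))"
    using degree_lt_monom_mult_P[of 1 a] by (simp add: monom_Suc monom_0)
  let ?c = "basis_coord P ([:0, 1:] * P a)"
  have spec: "(\<forall>k>Suc a. ?c k = 0) \<and> [:0, 1:] * P a = (\<Sum>k\<le>Suc a. smult (?c k) (P k))"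
    using basis_coord_eq_0[OF monic_basis_P x] basis_expansion[OF monic_basis_P x]
    by (auto simp: lessThan_Suc_atMost)
  have unique: "c = ?c" if "(\<forall>k>Suc a. c k = 0) \<and> [:0, 1:] * P a = (\<Sum>k\<le>Suc a. smult (c k) (P k))" for c
  proof
    fix k
    have "[:0, 1:] * P a = (\<Sum>k<Suc (Suc a). smult (c k) (P k))"
      using that by (simp add: lessThan_Suc_atMost)
    from basis_coord_of_expansion[OF monic_basis_P this, of k] show "c k = ?c k"
      using that by (auto simp: less_Suc_eq_le)
  qed
  have "J a = ?c"
    unfolding Jmat_def by (rule the1_equality) (use spec unique in blast)+
  then show ?thesis by simp
qed

lemma x_mult_P: "[:0, 1:] * P a = (\<Sum>c<Suc (Suc a). smult (J a c) (P c))"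
  unfolding Jmat_eq_basis_coord
  by (rule basis_expansion[OF monic_basis_P]) (use degree_lt_monom_mult_P[of 1 a] in \<open>simp add: monom_Suc monom_0\<close>)

lemma nu_int_eq: "nu_int \<mu>s r i n f = of_real (mod_mult_trace P (P n) f / real n)"
proof -
  have "(\<Sum>z::complex\<in>{z. poly (map_poly of_real (P n)) z = 0}.
        of_nat (order z (map_poly of_real (P n))) * poly (map_poly of_real f) z) =
      mod_mult_trace (\<lambda>k. map_poly of_real (P k)) (map_poly of_real (P n)) (map_poly of_real f)"
    using lead_coeff_P[of n]
    by (intro sum_roots_eq_mod_mult_trace monic_basis_map_poly_of_real monic_basis_P)
      (simp add: degree_map_poly_of_real coeff_map_poly_of_real)
  also have "\<dots> = of_real (mod_mult_trace P (P n) f)"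
    by (rule mod_mult_trace_map_poly_of_real[OF monic_basis_P P_nonzero])
  finally show ?thesis unfolding nu_int_def by simp
qed

section \<open>Comparison of the two traces\<close>

text \<open>\<open>J_power s a b\<close> is the entry \<open>(a, b)\<close> of \<open>J\<^sup>s\<close>, and \<open>J_trunc_power n s a b\<close> the one of \<open>J\<^sub>n\<^sup>s\<close>,
  where \<open>J\<^sub>n\<close> is the upper left \<open>n \<times> n\<close> block of \<open>J\<close>: multiplication by \<open>x\<close> in the bases
  \<open>P\<close> of \<open>\<real>[x]\<close> and of \<open>\<real>[x]/(P n)\<close>.\<close>

definition J_power :: "nat \<Rightarrow> nat \<Rightarrow> nat \<Rightarrow> real" where
  "J_power s a b = basis_coord P (monom 1 s * P a) b"

definition J_trunc :: "nat \<Rightarrow> nat \<Rightarrow> nat \<Rightarrow> real" where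
  "J_trunc n a c = (if a < n \<and> c < n then J a c else 0)"

definition J_trunc_power :: "nat \<Rightarrow> nat \<Rightarrow> nat \<Rightarrow> nat \<Rightarrow> real" where
  "J_trunc_power n s a b = (if a < n then basis_coord P ((monom 1 s * P a) mod P n) b else 0)"

lemma J_power_Suc: "J_power (Suc s) a b = (\<Sum>c<Suc (Suc a). J a c * J_power s c b)"
proof -
  have "monom 1 (Suc s) * P a = (\<Sum>c<Suc (Suc a). smult (J a c) (monom 1 s * P c))"
    unfolding monom_1_Suc_mult x_mult_P sum_distrib_left by (simp only: mult_smult_right)
  then show ?thesis
    unfolding J_power_def by (simp only: basis_coord_sum[OF monic_basis_P] basis_coord_smult[OF monic_basis_P])
qed

lemma J_power_eq_0: "a + s < b \<Longrightarrow> J_power s a b = 0"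
  unfolding J_power_def by (rule basis_coord_eq_0[OF monic_basis_P degree_lt_monom_mult_P]) simp

lemma abs_J_power_0: "\<bar>J_power 0 a b\<bar> \<le> 1"
  unfolding J_power_def by (simp add: basis_coord_basis[OF monic_basis_P])

lemma P_mod_P: "c \<le> n \<Longrightarrow> P c mod P n = (if c < n then P c else 0)"
  by (auto simp: mod_poly_less degree_P le_less)

lemma J_trunc_power_Suc: "J_trunc_power n (Suc s) a b = (\<Sum>c<Suc (Suc a). J_trunc n a c * J_trunc_power n s c b)"
proof (cases "a < n")
  case True
  have x_mod: "([:0, 1:] * P a) mod P n = (\<Sum>c<Suc (Suc a). smult (if c < n then J a c else 0) (P c))"
    unfolding x_mult_P sum_smult_mod using True by (auto simp: P_mod_P intro!: sum.cong)
  have "(monom 1 (Suc s) * P a) mod P n = (monom 1 s * (([:0, 1:] * P a) mod P n)) mod P n"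
    unfolding monom_1_Suc_mult by (rule mod_mult_right_eq[symmetric])
  also have "\<dots> = (\<Sum>c<Suc (Suc a). smult (if c < n then J a c else 0) ((monom 1 s * P c) mod P n))"
    unfolding x_mod by (rule mult_sum_smult_mod)
  finally have "J_trunc_power n (Suc s) a b =
      (\<Sum>c<Suc (Suc a). (if c < n then J a c else 0) * basis_coord P ((monom 1 s * P c) mod P n) b)"
    unfolding J_trunc_power_def using True
    by (simp only: if_True basis_coord_sum[OF monic_basis_P] basis_coord_smult[OF monic_basis_P])
  then show ?thesis
    using True by (auto simp: J_trunc_def J_trunc_power_def intro!: sum.cong)
qed (simp add: J_trunc_power_def J_trunc_def)

lemma J_trunc_power_eq_0: "a + s < b \<Longrightarrow> J_trunc_power n s a b = 0"
  unfolding J_trunc_power_def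
  by (auto intro!: basis_coord_eq_0[OF monic_basis_P degree_lt_mod[OF degree_lt_monom_mult_P P_nonzero]])

lemma abs_J_trunc_power_0: "\<bar>J_trunc_power n 0 a b\<bar> \<le> 1"
  unfolding J_trunc_power_def by (simp add: P_mod_P basis_coord_basis[OF monic_basis_P])

lemma basis_coord_mult_P_self:
  "basis_coord P (f * P k) k = (\<Sum>t<Suc (degree f). coeff f t * J_power t k k)"
  unfolding J_power_def mult_eq_sum_monom_mult[of f]
  by (simp only: basis_coord_sum[OF monic_basis_P] basis_coord_smult[OF monic_basis_P])

lemma basis_coord_mult_P_mod:
  "k < n \<Longrightarrow> basis_coord P ((f * P k) mod P n) k = (\<Sum>t<Suc (degree f). coeff f t * J_trunc_power n t k k)"
proof -
  assume "k < n"
  have "(f * P k) mod P n = (\<Sum>t<Suc (degree f). smult (coeff f t) ((monom 1 t * P k) mod P n))"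
    unfolding mult_eq_sum_monom_mult[of f] by (rule sum_smult_mod)
  then show ?thesis
    unfolding J_trunc_power_def using \<open>k < n\<close>
    by (simp only: if_True basis_coord_sum[OF monic_basis_P] basis_coord_smult[OF monic_basis_P])
qed

lemma basis_coord_mult_P_mod_eq:
  "k + degree f < n \<Longrightarrow> basis_coord P ((f * P k) mod P n) k = basis_coord P (f * P k) k"
  using degree_mult_le[of f "P k"] by (simp add: mod_poly_less degree_P)

end

locale mop_path_banded = mop_path +
  fixes B :: "nat \<Rightarrow> real"
  assumes J_banded: "\<And>R a c. a \<le> c + R \<Longrightarrow> c \<le> a + R \<Longrightarrow> \<bar>Jmat \<mu>s r i a c\<bar> \<le> B R"
begin

lemma abs_J_power_le: "\<bar>J_power s k k\<bar> \<le> band_power_bound B s 0"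
  using banded_recursion_bound[of J B J_power, OF J_banded abs_J_power_0 J_power_Suc J_power_eq_0] by simp

lemma abs_J_trunc_power_le: "\<bar>J_trunc_power n s k k\<bar> \<le> band_power_bound B s 0"
proof -
  have "\<bar>J_trunc n a c\<bar> \<le> B R" if "a \<le> c + R" "c \<le> a + R" for R a c
    using J_banded[OF that] J_banded[of 0 0 R] by (auto simp: J_trunc_def)
  from banded_recursion_bound[of "J_trunc n" B "J_trunc_power n", OF this abs_J_trunc_power_0
      J_trunc_power_Suc J_trunc_power_eq_0]
  show ?thesis by simp
qed

definition diag_bound :: "real poly \<Rightarrow> real" where
  "diag_bound f = (\<Sum>t<Suc (degree f). \<bar>coeff f t\<bar> * band_power_bound B t 0)"

lemma abs_basis_coord_mult_P_le: "\<bar>basis_coord P (f * P k) k\<bar> \<le> diag_bound f"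
proof -
  have "\<bar>basis_coord P (f * P k) k\<bar> \<le> (\<Sum>t<Suc (degree f). \<bar>coeff f t * J_power t k k\<bar>)"
    unfolding basis_coord_mult_P_self by (rule sum_abs)
  also have "\<dots> \<le> diag_bound f"
    unfolding diag_bound_def abs_mult by (intro sum_mono mult_left_mono abs_J_power_le) auto
  finally show ?thesis .
qed

lemma abs_basis_coord_mult_P_mod_le: "k < n \<Longrightarrow> \<bar>basis_coord P ((f * P k) mod P n) k\<bar> \<le> diag_bound f"
proof -
  assume "k < n"
  have "\<bar>basis_coord P ((f * P k) mod P n) k\<bar> \<le> (\<Sum>t<Suc (degree f). \<bar>coeff f t * J_trunc_power n t k k\<bar>)"
    unfolding basis_coord_mult_P_mod[OF \<open>k < n\<close>] by (rule sum_abs)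
  also have "\<dots> \<le> diag_bound f"
    unfolding diag_bound_def abs_mult by (intro sum_mono mult_left_mono abs_J_trunc_power_le) auto
  finally show ?thesis .
qed

text \<open>Only the last \<open>degree f\<close> diagonal entries of \<open>f(J\<^sub>n)\<close> and \<open>f(J)\<close> can differ.\<close>

lemma abs_trace_difference_le:
  "\<bar>mod_mult_trace P (P n) f - (\<Sum>k<n. basis_coord P (f * P k) k)\<bar> \<le> real (degree f) * (2 * diag_bound f)"
proof -
  define d where "d = degree f"
  define \<delta> where "\<delta> k = basis_coord P ((f * P k) mod P n) k - basis_coord P (f * P k) k" for k
  have \<delta>_bound: "\<bar>\<delta> k\<bar> \<le> 2 * diag_bound f" if "k < n" for k
    using abs_basis_coord_mult_P_le[of f k] abs_basis_coord_mult_P_mod_le[OF that, of f]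
    unfolding \<delta>_def by linarith
  have "mod_mult_trace P (P n) f - (\<Sum>k<n. basis_coord P (f * P k) k) = (\<Sum>k<n. \<delta> k)"
    by (simp add: mod_mult_trace_def degree_P \<delta>_def sum_subtractf mult.commute)
  also have "\<dots> = (\<Sum>k\<in>{n - d..<n}. \<delta> k)"
    by (rule sum.mono_neutral_right) (auto simp: \<delta>_def d_def basis_coord_mult_P_mod_eq)
  finally have "\<bar>mod_mult_trace P (P n) f - (\<Sum>k<n. basis_coord P (f * P k) k)\<bar> \<le> (\<Sum>k\<in>{n - d..<n}. \<bar>\<delta> k\<bar>)"
    by (simp add: sum_abs)
  also have "\<dots> \<le> (\<Sum>k\<in>{n - d..<n}. 2 * diag_bound f)"
    by (rule sum_mono) (auto intro: \<delta>_bound)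
  also have "\<dots> = real (n - (n - d)) * (2 * diag_bound f)"
    by simp
  also have "\<dots> \<le> real d * (2 * diag_bound f)"
    using abs_basis_coord_mult_P_le[of f 0] by (intro mult_right_mono) auto
  finally show ?thesis by (simp add: d_def)
qed

lemma nu_eta_difference_tendsto_0:
  "(\<lambda>n. cmod (nu_int \<mu>s r i n f - complex_of_real (eta_int \<mu> \<mu>s r i w n f))) \<longlonglongrightarrow> 0"
proof (rule Lim_null_comparison)
  have "cmod (nu_int \<mu>s r i n f - complex_of_real (eta_int \<mu> \<mu>s r i w n f))
      = \<bar>mod_mult_trace P (P n) f - (\<Sum>k<n. basis_coord P (f * P k) k)\<bar> / real n" for n
    unfolding nu_int_eq eta_int_eq
    by (simp only: of_real_diff[symmetric] norm_of_real diff_divide_distrib[symmetric] abs_divide abs_of_nat)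
  then show "\<forall>\<^sub>F n in sequentially.
      norm (cmod (nu_int \<mu>s r i n f - complex_of_real (eta_int \<mu> \<mu>s r i w n f))) \<le>
      real (degree f) * (2 * diag_bound f) / real n"
    by (intro always_eventually allI) (simp add: divide_right_mono abs_trace_difference_le)
  show "(\<lambda>n. real (degree f) * (2 * diag_bound f) / real n) \<longlonglongrightarrow> 0"
    by (rule lim_const_over_n)
qed

end

theorem theorem4:
  fixes r :: nat and \<mu>s :: "nat \<Rightarrow> real measure" and \<mu> :: "real measure"
    and w :: "nat \<Rightarrow> real \<Rightarrow> real" and i :: "nat \<Rightarrow> nat"
  assumes r_pos: "r \<ge> 1"
    and borel_mus: "\<forall>j<r. sets (\<mu>s j) = sets borel"
    and moments: "\<forall>j<r. \<forall>k::nat. integrable (\<mu>s j) (\<lambda>x. x ^ k)"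
    and perfect: "perfect_system \<mu>s r"
    and borel_mu: "sets \<mu> = sets borel"
    and w_meas: "\<forall>j<r. w j \<in> borel_measurable borel \<and> (\<forall>x. 0 \<le> w j x)"
    and w_RN: "\<forall>j<r. \<mu>s j = density \<mu> (\<lambda>x. ennreal (w j x))"
    and path: "\<forall>l. i l < r"
    and J_bounded: "\<forall>R::nat. \<exists>B. \<forall>a b. a \<le> b + R \<and> b \<le> a + R \<longrightarrow> \<bar>Jmat \<mu>s r i a b\<bar> \<le> B"
  shows "(\<forall>l::nat. (\<lambda>n. cmod (nu_int \<mu>s r i n (monom 1 l) - complex_of_real (eta_int \<mu> \<mu>s r i w n (monom 1 l))))
            \<longlonglongrightarrow> 0)
       \<and> (\<forall>f::real poly. (\<lambda>n. cmod (nu_int \<mu>s r i n f - complex_of_real (eta_int \<mu> \<mu>s r i w n f)))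
            \<longlonglongrightarrow> 0)"
proof -
  interpret mop_path r \<mu>s \<mu> w i
    using borel_mus moments perfect borel_mu w_meas w_RN path by unfold_locales
  obtain B where "\<forall>R a b. a \<le> b + R \<and> b \<le> a + R \<longrightarrow> \<bar>Jmat \<mu>s r i a b\<bar> \<le> B R"
    using choice[OF J_bounded] by blast
  then interpret mop_path_banded r \<mu>s \<mu> w i B
    by unfold_locales blast
  show ?thesis using nu_eta_difference_tendsto_0 by blast
qed

end
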